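(* For every odd integer $g\geqslant1$, $J_g^-=J_{g-1}^-$.
   Context: $\zeta_k^-\in\mathbb{C}[\alpha,\gamma]$: $\zeta^-_i=0$ for $i<0$, $\zeta^-_0=1$, $\zeta^-_{k+1}=\alpha\zeta^-_k-16k^2\zeta^-_{k-1}+2k(k-1)\gamma\zeta^-_{k-2}$ for $k$ odd and $\zeta^-_{k+1}=\alpha\zeta^-_k+2k(k-1)\gamma\zeta^-_{k-2}$ for $k$ even ($k\geqslant0$); $J^-_k$ is the ideal $(\zeta^-_k,\zeta^-_{k+1},\zeta^-_{k+2})$ of $\mathbb{C}[\alpha,\gamma]$. *)

theory Defs
  imports Complex_Main "HOL-Computational_Algebra.Polynomial"
begin

text \<open>The ring C[alpha,gamma] is modelled as complex poly poly:
  polynomials in gamma (outer variable) whose coefficients are polynomials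
  in alpha (inner variable).\<close>

definition var_alpha :: "complex poly poly" where
  "var_alpha = [: [:0, 1:] :]"

definition var_gamma :: "complex poly poly" where
  "var_gamma = [:0, 1:]"

text \<open>zeta_minus k for k >= 0 (zeta_i = 0 for i < 0 only enters through terms
  whose coefficient vanishes: 16 k^2 zeta_(k-1) occurs only for odd k >= 1,
  and 2k(k-1) gamma zeta_(k-2) has coefficient 0 for k < 2).\<close>
fun zeta_minus :: "nat \<Rightarrow> complex poly poly" where
  "zeta_minus 0 = 1"
| "zeta_minus (Suc k) =
     var_alpha * zeta_minus k
     - (if odd k then of_nat (16 * k\<^sup>2) * zeta_minus (k - 1) else 0)
     + of_nat (2 * k * (k - 1)) * var_gamma * zeta_minus (k - 2)"

definition ideal3 :: "'a::comm_ring_1 \<Rightarrow> 'a \<Rightarrow> 'a \<Rightarrow> 'a set" where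
  "ideal3 x y z = {a * x + b * y + c * z | a b c. True}"

definition J_minus :: "nat \<Rightarrow> complex poly poly set" where
  "J_minus k = ideal3 (zeta_minus k) (zeta_minus (k + 1)) (zeta_minus (k + 2))"

end

theory Submission
  imports Defs
    "HOL-Computational_Algebra.Fundamental_Theorem_Algebra"
    "HOL-Computational_Algebra.Polynomial_Factorial"
    "HOL-Computational_Algebra.Field_as_Ring"
begin

text \<open>Let \<open>W = \<zeta>(2m)\<close> and \<open>I = J(2m+1)\<close>; the inclusion \<open>J(2m+1) \<subseteq> J(2m)\<close> is
  immediate from the recurrence, so the point is \<open>W \<in> I\<close>. The recurrence for \<open>\<zeta>(2m+3)\<close>
  gives \<open>\<gamma> W \<in> I\<close>. Solving the recurrence for its \<open>\<gamma>\<close>-term and descending from \<open>2m\<close>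
  to \<open>0\<close> yields \<open>\<gamma>\<^sup>l \<zeta>(2(m-l)) \<equiv> P\<^sub>l(\<alpha>) W\<close> and \<open>\<gamma>\<^sup>l \<zeta>(2(m-l)+1) \<equiv> Q\<^sub>l(\<alpha>) W\<close> modulo \<open>I\<close>;
  as \<open>\<zeta>(1) = \<alpha> \<zeta>(0)\<close>, the case \<open>l = m\<close> gives \<open>h(\<alpha>) W \<in> I\<close> for \<open>h = Q\<^sub>m - \<alpha> P\<^sub>m\<close>.
  Since also \<open>\<zeta>(2m+2) \<in> I\<close>, its \<open>\<gamma>\<close>-free part \<open>p = \<Prod>\<^sub>i\<^sub>\<le>\<^sub>m (\<alpha>\<^sup>2 - 16(2i+1)\<^sup>2)\<close> satisfies
  \<open>p(\<alpha>) W \<in> I\<close>. The roots of \<open>p\<close> are real and nonzero, while \<open>(-x)\<^sup>l P\<^sub>l(x) > 0\<close> and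
  \<open>(-x)\<^sup>l\<^sup>+\<^sup>1 Q\<^sub>l(x) \<ge> 0\<close> for real \<open>x \<noteq> 0\<close> show that \<open>h\<close> has no such root. Hence \<open>p\<close> and
  \<open>h\<close> are coprime and \<open>W \<in> I\<close>.\<close>

definition is_ideal :: "'a::comm_ring_1 set \<Rightarrow> bool" where
  "is_ideal I \<longleftrightarrow> 0 \<in> I \<and> (\<forall>u\<in>I. \<forall>v\<in>I. u + v \<in> I) \<and> (\<forall>r. \<forall>u\<in>I. r * u \<in> I)"

lemma is_idealI:
  assumes "0 \<in> I" "\<And>u v. u \<in> I \<Longrightarrow> v \<in> I \<Longrightarrow> u + v \<in> I" "\<And>r u. u \<in> I \<Longrightarrow> r * u \<in> I"
  shows "is_ideal I"
  using assms by (simp add: is_ideal_def)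

lemma ideal_zero: "is_ideal I \<Longrightarrow> 0 \<in> I"
  by (simp add: is_ideal_def)

lemma ideal_add: "is_ideal I \<Longrightarrow> u \<in> I \<Longrightarrow> v \<in> I \<Longrightarrow> u + v \<in> I"
  by (simp add: is_ideal_def)

lemma ideal_mult: "is_ideal I \<Longrightarrow> u \<in> I \<Longrightarrow> r * u \<in> I"
  by (simp add: is_ideal_def)

lemma ideal_diff:
  assumes "is_ideal I" "u \<in> I" "v \<in> I"
  shows "u - v \<in> I"
proof -
  have "u + (- 1) * v \<in> I" using assms by (intro ideal_add ideal_mult)
  then show ?thesis by simp
qed

lemma ideal_unit_cancel:
  assumes I: "is_ideal I" and "is_unit c" and "c * u \<in> I"
  shows "u \<in> I"
proof -
  obtain d where "1 = c * d" using \<open>is_unit c\<close> by (rule dvdE)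
  then have "u = d * (c * u)" by (metis mult.assoc mult.commute mult_1)
  then show ?thesis by (subst \<open>u = d * (c * u)\<close>) (rule ideal_mult[OF I \<open>c * u \<in> I\<close>])
qed

lemma ideal_comaximal_cancel:
  assumes I: "is_ideal I" and "a * u \<in> I" "b * u \<in> I" and "s * a + t * b = 1"
  shows "u \<in> I"
proof -
  have "s * (a * u) + t * (b * u) \<in> I"
    using ideal_add[OF I ideal_mult[OF I assms(2)] ideal_mult[OF I assms(3)]] .
  moreover have "s * (a * u) + t * (b * u) = u"
    by (metis assms(4) distrib_right mult.assoc mult_1)
  ultimately show ?thesis by simp
qed

lemma ideal3_iff: "u \<in> ideal3 x y z \<longleftrightarrow> (\<exists>a b c. u = a * x + b * y + c * z)"
  by (simp add: ideal3_def)

lemma is_ideal_ideal3: "is_ideal (ideal3 x y z)"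
proof (rule is_idealI)
  show "0 \<in> ideal3 x y z" unfolding ideal3_iff by (rule exI[of _ 0])+ simp
next
  fix u v assume "u \<in> ideal3 x y z" "v \<in> ideal3 x y z"
  then obtain a b c a' b' c' where "u = a * x + b * y + c * z" "v = a' * x + b' * y + c' * z"
    unfolding ideal3_iff by blast
  then have "u + v = (a + a') * x + (b + b') * y + (c + c') * z" by (simp add: algebra_simps)
  then show "u + v \<in> ideal3 x y z" unfolding ideal3_iff by blast
next
  fix r u assume "u \<in> ideal3 x y z"
  then obtain a b c where "u = a * x + b * y + c * z" unfolding ideal3_iff by blast
  then have "r * u = (r * a) * x + (r * b) * y + (r * c) * z" by (simp add: algebra_simps)
  then show "r * u \<in> ideal3 x y z" unfolding ideal3_iff by blast
qed

lemma ideal3_generators: "x \<in> ideal3 x y z" "y \<in> ideal3 x y z" "z \<in> ideal3 x y z"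
  unfolding ideal3_iff
    apply (rule exI[of _ 1], rule exI[of _ 0], rule exI[of _ 0], simp)
   apply (rule exI[of _ 0], rule exI[of _ 1], rule exI[of _ 0], simp)
  apply (rule exI[of _ 0], rule exI[of _ 0], rule exI[of _ 1], simp)
  done

lemma ideal3_least:
  assumes I: "is_ideal I" and "x \<in> I" "y \<in> I" "z \<in> I"
  shows "ideal3 x y z \<subseteq> I"
  using assms unfolding ideal3_def by (auto intro!: ideal_add ideal_mult)

lemma is_unit_of_nat_poly_poly: "K \<noteq> 0 \<Longrightarrow> is_unit (of_nat K :: 'a::field_char_0 poly poly)"
  by (simp add: of_nat_poly is_unit_const_poly_iff dvd_field_iff)

lemma const_poly_smult_inverse_of_nat:
  assumes "K \<noteq> 0"
  shows "of_nat K * [:smult (inverse (of_nat K)) p:] = ([:p:] :: 'a::field_char_0 poly poly)"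
  using assms by (simp add: of_nat_poly)

lemma ideal_of_nat_cancel:
  fixes u :: "'a::field_char_0 poly poly"
  assumes "is_ideal I" "K \<noteq> 0" "of_nat K * u \<in> I"
  shows "u \<in> I"
  using assms by (blast intro: ideal_unit_cancel is_unit_of_nat_poly_poly)

lemma const_poly_diff: "[:p - q:] = [:p:] - [:q:]"
  by simp

lemma const_poly_smult_of_nat: "[:smult (of_nat N) p:] = (of_nat N * [:p:] :: 'a::comm_ring_1 poly poly)"
  by (simp add: of_nat_poly)

lemma poly_bezout_one_of_no_common_root:
  fixes p q :: "complex poly"
  assumes no_common_root: "\<And>z. poly p z = 0 \<Longrightarrow> poly q z \<noteq> 0"
  obtains u v where "u * p + v * q = 1"
proof -
  define g where "g = gcd p q"
  have "poly g z \<noteq> 0" for z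
  proof
    assume "poly g z = 0"
    moreover have "g dvd p" "g dvd q" by (simp_all add: g_def)
    ultimately have "poly p z = 0" "poly q z = 0" by (auto elim!: dvdE)
    with no_common_root show False by blast
  qed
  then obtain c where c: "c \<noteq> 0" "g = [:c:]"
    using fundamental_theorem_of_algebra_alt[of g] by blast
  obtain u v where uv: "u * p + v * q = g"
    using bezout_coefficients[of p q] unfolding g_def by (metis prod.collapse)
  have "[:inverse c:] * g = 1" using c by (simp add: one_pCons)
  then have "([:inverse c:] * u) * p + ([:inverse c:] * v) * q = 1"
    unfolding uv[symmetric] by (simp only: distrib_left mult.assoc)
  then show ?thesis by (rule that)
qed

declare zeta_minus.simps(2) [simp del]

lemma coeff_0_zeta_minus_Suc:
  "coeff (zeta_minus (Suc k)) 0 = [:0, 1:] * coeff (zeta_minus k) 0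
     - (if odd k then of_nat (16 * k\<^sup>2) * coeff (zeta_minus (k - 1)) 0 else 0)"
  by (simp add: zeta_minus.simps(2) coeff_mult_0 var_alpha_def var_gamma_def of_nat_poly)

lemma coeff_0_zeta_minus_even:
  "coeff (zeta_minus (2 * n)) 0 = (\<Prod>i<n. [:- of_nat (16 * (2 * i + 1)\<^sup>2), 0, 1:])"
proof (induction n)
  case 0
  show ?case by simp
next
  case (Suc n)
  have odd_step: "coeff (zeta_minus (Suc (2 * n))) 0 = [:0, 1:] * coeff (zeta_minus (2 * n)) 0"
    using coeff_0_zeta_minus_Suc[of "2 * n"] by simp
  have "coeff (zeta_minus (2 * Suc n)) 0
      = [:0, 1:] * coeff (zeta_minus (Suc (2 * n))) 0
        - of_nat (16 * (2 * n + 1)\<^sup>2) * coeff (zeta_minus (2 * n)) 0"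
    using coeff_0_zeta_minus_Suc[of "Suc (2 * n)"] by simp
  also have "\<dots> = [:- of_nat (16 * (2 * n + 1)\<^sup>2), 0, 1:] * coeff (zeta_minus (2 * n)) 0"
    unfolding odd_step by (simp add: algebra_simps of_nat_poly)
  finally show ?case by (simp add: Suc.IH)
qed

lemma coeff_0_zeta_minus_even_root:
  assumes "poly (coeff (zeta_minus (2 * n)) 0) z = 0"
  obtains x :: real where "x \<noteq> 0" "z = of_real x"
proof -
  have square: "z\<^sup>2 = of_nat N" if "poly [:- of_nat N, 0, 1:] z = 0" for N
    using that by (simp add: power2_eq_square)
  obtain i where "poly [:- of_nat (16 * (2 * i + 1)\<^sup>2), 0, 1:] z = 0"
    using assms by (auto simp: coeff_0_zeta_minus_even poly_prod prod_zero_iff)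
  then have "z\<^sup>2 = of_nat (16 * (2 * i + 1)\<^sup>2)" by (rule square)
  also have "\<dots> = (of_real (4 * (2 * real i + 1)))\<^sup>2"
    by (simp add: power2_eq_square algebra_simps)
  finally have "z = of_real (4 * (2 * real i + 1)) \<or> z = of_real (- (4 * (2 * real i + 1)))"
    by (simp add: power2_eq_iff)
  moreover have "4 * (2 * real i + 1) \<noteq> 0" by simp
  ultimately show ?thesis using that by (metis neg_equal_0_iff_equal)
qed

lemma zeta_minus_odd_step:
  "zeta_minus (2 * n + 3)
     = var_alpha * zeta_minus (2 * n + 2) + of_nat (2 * (2 * n + 2) * (2 * n + 1)) * var_gamma * zeta_minus (2 * n)"
proof -
  have "2 * n + 3 = Suc (2 * n + 2)" by simp
  then show ?thesis by (simp only: zeta_minus.simps(2)) simp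
qed

lemma zeta_minus_even_step:
  "zeta_minus (2 * n + 4)
     = var_alpha * zeta_minus (2 * n + 3) - of_nat (16 * (2 * n + 3)\<^sup>2) * zeta_minus (2 * n + 2)
       + of_nat (2 * (2 * n + 3) * (2 * n + 2)) * var_gamma * zeta_minus (2 * n + 1)"
proof -
  have "2 * n + 4 = Suc (2 * n + 3)" by simp
  then show ?thesis by (simp only: zeta_minus.simps(2)) simp
qed

lemma zeta_minus_one: "zeta_minus 1 = var_alpha * zeta_minus 0"
  using zeta_minus.simps(2)[of 0] by simp

lemma const_poly_var_mult: "[:[:0, 1:] * p:] = var_alpha * [:p:]"
  by (simp add: var_alpha_def)

text \<open>\<open>descent_P m l\<close> and \<open>descent_Q m l\<close> are the \<open>P\<^sub>l\<close>, \<open>Q\<^sub>l\<close> of the header; their recursion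
  is the recurrence for \<open>\<zeta>(2i+3)\<close> resp. \<open>\<zeta>(2i+4)\<close>, \<open>i = m - l - 1\<close>, solved for its \<open>\<gamma>\<close>-term.\<close>

fun descent_P :: "nat \<Rightarrow> nat \<Rightarrow> 'a::field_char_0 poly"
  and descent_Q :: "nat \<Rightarrow> nat \<Rightarrow> 'a::field_char_0 poly" where
  "descent_P m 0 = 1"
| "descent_P m (Suc l) =
     smult (inverse (of_nat (2 * (2 * (m - Suc l) + 2) * (2 * (m - Suc l) + 1))))
       (descent_Q m l - [:0, 1:] * descent_P m l)"
| "descent_Q m 0 = 0"
| "descent_Q m (Suc l) =
     smult (inverse (of_nat (2 * (2 * (m - Suc l) + 3) * (2 * (m - Suc l) + 2))))
       (smult (of_nat (16 * (2 * (m - Suc l) + 3)\<^sup>2)) (descent_P m l) - [:0, 1:] * descent_Q m l)"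

lemma descent_sign:
  fixes x :: real
  assumes "x \<noteq> 0"
  shows "0 < (- x) ^ l * poly (descent_P m l) x \<and> 0 \<le> (- x) ^ Suc l * poly (descent_Q m l) x"
proof (induction l)
  case 0
  show ?case by simp
next
  case (Suc l)
  define i where "i = m - Suc l"
  define P where "P = (- x) ^ l * poly (descent_P m l) x"
  define Q where "Q = (- x) ^ Suc l * poly (descent_Q m l) x"
  have step_P: "(- x) ^ Suc l * poly (descent_P m (Suc l)) x
      = inverse (of_nat (2 * (2 * i + 2) * (2 * i + 1))) * (Q + x * x * P)"
    by (simp add: P_def Q_def flip: i_def) (simp add: algebra_simps)
  have step_Q: "(- x) ^ Suc (Suc l) * poly (descent_Q m (Suc l)) x
      = inverse (of_nat (2 * (2 * i + 3) * (2 * i + 2))) * (x * x * (of_nat (16 * (2 * i + 3)\<^sup>2) * P + Q))"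
    by (simp add: P_def Q_def flip: i_def) (simp add: algebra_simps)
  have "0 < P" "0 \<le> Q" using Suc.IH by (simp_all add: P_def Q_def)
  moreover have "0 < x * x" using assms by (auto simp: zero_less_mult_iff linorder_neq_iff)
  moreover have "0 < inverse (of_nat (2 * (2 * i + 2) * (2 * i + 1)) :: real)"
    and "0 < inverse (of_nat (2 * (2 * i + 3) * (2 * i + 2)) :: real)"
    by (simp_all only: inverse_positive_iff_positive of_nat_0_less_iff) simp_all
  ultimately show ?case
    unfolding step_P step_Q by (auto intro!: mult_pos_pos mult_nonneg_nonneg add_nonneg_pos)
qed

lemma descent_endpoint_nonzero:
  fixes x :: real
  assumes "x \<noteq> 0"
  shows "poly (descent_Q m m - [:0, 1:] * descent_P m m) x \<noteq> 0"
proof -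
  have "(- x) ^ Suc m * poly (descent_Q m m - [:0, 1:] * descent_P m m) x
      = (- x) ^ Suc m * poly (descent_Q m m) x + x * x * ((- x) ^ m * poly (descent_P m m) x)"
    by (simp add: algebra_simps)
  also have "\<dots> > 0"
  proof (rule add_nonneg_pos)
    show "0 \<le> (- x) ^ Suc m * poly (descent_Q m m) x" using descent_sign[OF assms] by blast
    have "0 < x * x" using assms by (auto simp: zero_less_mult_iff linorder_neq_iff)
    then show "0 < x * x * ((- x) ^ m * poly (descent_P m m) x)"
      using descent_sign[OF assms] by (simp add: mult_pos_pos)
  qed
  finally show ?thesis by auto
qed

lemma poly_descent_of_real:
  "poly (descent_P m l) (of_real x) = (of_real (poly (descent_P m l) x) :: 'a::{real_field, field_char_0})"
  "poly (descent_Q m l) (of_real x) = (of_real (poly (descent_Q m l) x) :: 'a)"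
  by (induction l) (simp_all add: of_real_inverse)

lemma is_ideal_J_minus: "is_ideal (J_minus k)"
  unfolding J_minus_def by (rule is_ideal_ideal3)

lemma zeta_minus_mem_J_minus:
  "zeta_minus k \<in> J_minus k" "zeta_minus (k + 1) \<in> J_minus k" "zeta_minus (k + 2) \<in> J_minus k"
  unfolding J_minus_def by (rule ideal3_generators)+

lemma zeta_minus_mem_J_minus_odd:
  "zeta_minus (2 * m + 1) \<in> J_minus (2 * m + 1)" "zeta_minus (2 * m + 2) \<in> J_minus (2 * m + 1)"
  "zeta_minus (2 * m + 3) \<in> J_minus (2 * m + 1)"
  using zeta_minus_mem_J_minus[of "2 * m + 1"] by (simp_all add: eval_nat_numeral)

lemma J_minus_subsetI:
  "is_ideal I \<Longrightarrow> zeta_minus k \<in> I \<Longrightarrow> zeta_minus (k + 1) \<in> I \<Longrightarrow> zeta_minus (k + 2) \<in> I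
    \<Longrightarrow> J_minus k \<subseteq> I"
  unfolding J_minus_def by (rule ideal3_least)

lemma var_gamma_zeta_minus_mem_J_minus: "var_gamma * zeta_minus (2 * m) \<in> J_minus (2 * m + 1)"
proof -
  have "of_nat (2 * (2 * m + 2) * (2 * m + 1)) * (var_gamma * zeta_minus (2 * m))
      = zeta_minus (2 * m + 3) - var_alpha * zeta_minus (2 * m + 2)"
    unfolding zeta_minus_odd_step by (simp add: algebra_simps)
  also have "\<dots> \<in> J_minus (2 * m + 1)"
    using zeta_minus_mem_J_minus_odd by (intro ideal_diff ideal_mult is_ideal_J_minus)
  finally show ?thesis by (rule ideal_of_nat_cancel[OF is_ideal_J_minus, rotated]) simp
qed

lemma descent_P_Suc_congruence:
  fixes m l i :: nat
  defines "I \<equiv> J_minus (2 * m + 1)" and "W \<equiv> zeta_minus (2 * m)"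
  assumes i: "m - l = i + 1"
    and P: "var_gamma ^ l * zeta_minus (2 * i + 2) - [:descent_P m l:] * W \<in> I"
    and Q: "var_gamma ^ l * zeta_minus (2 * i + 3) - [:descent_Q m l:] * W \<in> I"
  shows "var_gamma ^ Suc l * zeta_minus (2 * i) - [:descent_P m (Suc l):] * W \<in> I"
proof -
  have I: "is_ideal I" unfolding I_def by (rule is_ideal_J_minus)
  define B where "B = 2 * (2 * i + 2) * (2 * i + 1)"
  have "B \<noteq> 0" by (simp add: B_def)
  have "m - Suc l = i" using i by simp
  then have P_Suc: "descent_P m (Suc l) = smult (inverse (of_nat B)) (descent_Q m l - [:0, 1:] * descent_P m l)"
    unfolding B_def by (simp only: descent_P.simps(2))
  have P_rec: "of_nat B * [:descent_P m (Suc l):] = [:descent_Q m l:] - var_alpha * [:descent_P m l:]"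
    unfolding P_Suc const_poly_smult_inverse_of_nat[OF \<open>B \<noteq> 0\<close>] const_poly_diff const_poly_var_mult ..
  have step: "zeta_minus (2 * i + 3) = var_alpha * zeta_minus (2 * i + 2) + of_nat B * var_gamma * zeta_minus (2 * i)"
    unfolding B_def by (rule zeta_minus_odd_step)
  have "of_nat B * (var_gamma ^ Suc l * zeta_minus (2 * i) - [:descent_P m (Suc l):] * W)
      = var_gamma ^ l * (of_nat B * var_gamma * zeta_minus (2 * i)) - (of_nat B * [:descent_P m (Suc l):]) * W"
    by (simp add: algebra_simps)
  also have "\<dots> = (var_gamma ^ l * zeta_minus (2 * i + 3) - [:descent_Q m l:] * W)
      - var_alpha * (var_gamma ^ l * zeta_minus (2 * i + 2) - [:descent_P m l:] * W)"
    unfolding P_rec step by (simp add: algebra_simps)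
  also have "\<dots> \<in> I" by (rule ideal_diff[OF I Q ideal_mult[OF I P]])
  finally show ?thesis by (rule ideal_of_nat_cancel[OF I \<open>B \<noteq> 0\<close>])
qed

lemma descent_Q_Suc_congruence:
  fixes m l i :: nat
  defines "I \<equiv> J_minus (2 * m + 1)" and "W \<equiv> zeta_minus (2 * m)"
  assumes i: "m - l = i + 1"
    and P: "var_gamma ^ l * zeta_minus (2 * i + 2) - [:descent_P m l:] * W \<in> I"
    and Q: "var_gamma ^ l * zeta_minus (2 * i + 3) - [:descent_Q m l:] * W \<in> I"
    and R: "var_gamma ^ l * zeta_minus (2 * i + 4) \<in> I"
  shows "var_gamma ^ Suc l * zeta_minus (2 * i + 1) - [:descent_Q m (Suc l):] * W \<in> I"
proof -
  have I: "is_ideal I" unfolding I_def by (rule is_ideal_J_minus)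
  define B where "B = 2 * (2 * i + 3) * (2 * i + 2)"
  define E where "E = 16 * (2 * i + 3)\<^sup>2"
  have "B \<noteq> 0" by (simp add: B_def)
  have "m - Suc l = i" using i by simp
  then have Q_Suc: "descent_Q m (Suc l)
      = smult (inverse (of_nat B)) (smult (of_nat E) (descent_P m l) - [:0, 1:] * descent_Q m l)"
    unfolding B_def E_def by (simp only: descent_Q.simps(2))
  have Q_rec: "of_nat B * [:descent_Q m (Suc l):] = of_nat E * [:descent_P m l:] - var_alpha * [:descent_Q m l:]"
    unfolding Q_Suc const_poly_smult_inverse_of_nat[OF \<open>B \<noteq> 0\<close>] const_poly_diff const_poly_var_mult
      const_poly_smult_of_nat ..
  have step: "zeta_minus (2 * i + 4) = var_alpha * zeta_minus (2 * i + 3) - of_nat E * zeta_minus (2 * i + 2)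
      + of_nat B * var_gamma * zeta_minus (2 * i + 1)"
    unfolding B_def E_def by (rule zeta_minus_even_step)
  have "of_nat B * (var_gamma ^ Suc l * zeta_minus (2 * i + 1) - [:descent_Q m (Suc l):] * W)
      = var_gamma ^ l * (of_nat B * var_gamma * zeta_minus (2 * i + 1)) - (of_nat B * [:descent_Q m (Suc l):]) * W"
    by (simp add: algebra_simps)
  also have "\<dots> = var_gamma ^ l * zeta_minus (2 * i + 4)
      - var_alpha * (var_gamma ^ l * zeta_minus (2 * i + 3) - [:descent_Q m l:] * W)
      + of_nat E * (var_gamma ^ l * zeta_minus (2 * i + 2) - [:descent_P m l:] * W)"
    unfolding Q_rec step by (simp add: algebra_simps)
  also have "\<dots> \<in> I" by (rule ideal_add[OF I ideal_diff[OF I R ideal_mult[OF I Q]] ideal_mult[OF I P]])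
  finally show ?thesis by (rule ideal_of_nat_cancel[OF I \<open>B \<noteq> 0\<close>])
qed

lemma descent_congruences:
  fixes m l :: nat
  defines "I \<equiv> J_minus (2 * m + 1)" and "W \<equiv> zeta_minus (2 * m)"
  assumes "l \<le> m"
  shows "var_gamma ^ l * zeta_minus (2 * (m - l)) - [:descent_P m l:] * W \<in> I
    \<and> var_gamma ^ l * zeta_minus (2 * (m - l) + 1) - [:descent_Q m l:] * W \<in> I
    \<and> var_gamma ^ l * zeta_minus (2 * (m - l) + 2) \<in> I"
  using \<open>l \<le> m\<close>
proof (induction l)
  case 0
  show ?case using zeta_minus_mem_J_minus_odd ideal_zero[OF is_ideal_J_minus] by (simp add: I_def W_def)
next
  case (Suc l)
  have I: "is_ideal I" unfolding I_def by (rule is_ideal_J_minus)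
  have gamma_W: "var_gamma * W \<in> I" unfolding I_def W_def by (rule var_gamma_zeta_minus_mem_J_minus)
  define i where "i = m - Suc l"
  have i: "m - l = i + 1" using Suc.prems by (simp add: i_def)
  then have P: "var_gamma ^ l * zeta_minus (2 * i + 2) - [:descent_P m l:] * W \<in> I"
    and Q: "var_gamma ^ l * zeta_minus (2 * i + 3) - [:descent_Q m l:] * W \<in> I"
    and R: "var_gamma ^ l * zeta_minus (2 * i + 4) \<in> I"
    using Suc by (simp_all add: eval_nat_numeral)
  have "var_gamma ^ Suc l * zeta_minus (2 * i + 2)
      = var_gamma * (var_gamma ^ l * zeta_minus (2 * i + 2) - [:descent_P m l:] * W)
        + [:descent_P m l:] * (var_gamma * W)"
    by (simp add: algebra_simps)
  also have "\<dots> \<in> I" by (rule ideal_add[OF I ideal_mult[OF I P] ideal_mult[OF I gamma_W]])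
  finally show ?case
    using descent_P_Suc_congruence[OF i] descent_Q_Suc_congruence[OF i] P Q R
    by (simp add: i_def[symmetric] I_def W_def)
qed

lemma descent_endpoint_mem:
  "[:descent_Q m m - [:0, 1:] * descent_P m m:] * zeta_minus (2 * m) \<in> J_minus (2 * m + 1)"
proof -
  have P: "var_gamma ^ m * zeta_minus 0 - [:descent_P m m:] * zeta_minus (2 * m) \<in> J_minus (2 * m + 1)"
    and Q: "var_gamma ^ m * zeta_minus 1 - [:descent_Q m m:] * zeta_minus (2 * m) \<in> J_minus (2 * m + 1)"
    using descent_congruences[of m m] by simp_all
  have "[:descent_Q m m - [:0, 1:] * descent_P m m:] * zeta_minus (2 * m)
      = var_alpha * (var_gamma ^ m * zeta_minus 0 - [:descent_P m m:] * zeta_minus (2 * m))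
        - (var_gamma ^ m * zeta_minus 1 - [:descent_Q m m:] * zeta_minus (2 * m))"
    unfolding const_poly_diff const_poly_var_mult zeta_minus_one by (simp add: algebra_simps)
  also have "\<dots> \<in> J_minus (2 * m + 1)"
    by (rule ideal_diff[OF is_ideal_J_minus ideal_mult[OF is_ideal_J_minus P] Q])
  finally show ?thesis .
qed

lemma gamma_free_part_mem:
  "[:coeff (zeta_minus (2 * m + 2)) 0:] * zeta_minus (2 * m) \<in> J_minus (2 * m + 1)"
proof -
  define p where "p = coeff (zeta_minus (2 * m + 2)) 0"
  obtain T where T: "zeta_minus (2 * m + 2) = [:p:] + var_gamma * T"
  proof (cases "zeta_minus (2 * m + 2)")
    case (pCons a T)
    then show ?thesis by (intro that[of T]) (simp add: p_def var_gamma_def)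
  qed
  have "[:p:] * zeta_minus (2 * m) = zeta_minus (2 * m) * zeta_minus (2 * m + 2) - T * (var_gamma * zeta_minus (2 * m))"
    unfolding T by (simp add: algebra_simps)
  also have "\<dots> \<in> J_minus (2 * m + 1)"
    by (rule ideal_diff[OF is_ideal_J_minus ideal_mult[OF is_ideal_J_minus zeta_minus_mem_J_minus_odd(2)]
          ideal_mult[OF is_ideal_J_minus var_gamma_zeta_minus_mem_J_minus]])
  finally show ?thesis unfolding p_def .
qed

lemma zeta_minus_even_mem_J_minus: "zeta_minus (2 * m) \<in> J_minus (2 * m + 1)"
proof -
  define p where "p = coeff (zeta_minus (2 * m + 2)) 0"
  define h :: "complex poly" where "h = descent_Q m m - [:0, 1:] * descent_P m m"
  have "poly h z \<noteq> 0" if "poly p z = 0" for z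
  proof -
    have "poly (coeff (zeta_minus (2 * (m + 1))) 0) z = 0" using that by (simp add: p_def)
    then obtain x :: real where "x \<noteq> 0" "z = of_real x" by (rule coeff_0_zeta_minus_even_root)
    then have "poly h z = of_real (poly (descent_Q m m - [:0, 1:] * descent_P m m) x)"
      by (simp add: h_def poly_descent_of_real)
    with descent_endpoint_nonzero[OF \<open>x \<noteq> 0\<close>] show ?thesis by (simp only: of_real_eq_0_iff not_False_eq_True)
  qed
  then obtain u v where "u * p + v * h = 1" by (rule poly_bezout_one_of_no_common_root)
  then have "[:u:] * [:p:] + [:v:] * [:h:] = 1" by (simp add: mult.commute one_pCons)
  with gamma_free_part_mem descent_endpoint_mem show ?thesis
    unfolding p_def h_def by (rule ideal_comaximal_cancel[OF is_ideal_J_minus])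
qed

theorem corollary5p5:
  fixes g :: nat
  assumes "odd g" and "g \<ge> 1"
  shows "J_minus g = J_minus (g - 1)"
proof -
  obtain m where g: "g = 2 * m + 1" using \<open>odd g\<close> by (rule oddE)
  have "zeta_minus (2 * m + 3) \<in> J_minus (2 * m)"
    using zeta_minus_mem_J_minus[of "2 * m"] unfolding zeta_minus_odd_step
    by (intro ideal_add ideal_mult is_ideal_J_minus) simp_all
  then have "J_minus (2 * m + 1) \<subseteq> J_minus (2 * m)"
    using zeta_minus_mem_J_minus[of "2 * m"]
    by (intro J_minus_subsetI is_ideal_J_minus) (simp_all add: eval_nat_numeral)
  moreover have "J_minus (2 * m) \<subseteq> J_minus (2 * m + 1)"
    by (rule J_minus_subsetI[OF is_ideal_J_minus zeta_minus_even_mem_J_minus zeta_minus_mem_J_minus_odd(1,2)])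
  ultimately show ?thesis using g by auto
qed

end
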